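(* In the additive penalized estimation problem described in the context, suppose that for some $1\le j\le p$ the covariate $x^{(j)}$ is a scalar in $[0,1]$ and $\mathcal G_j$ is the bounded variation space $\mathcal V^m$ with $m=1$ or $m=2$ and semi-norm $\|g_j\|_{F,j}=\mathrm{TV}(g_j^{(m-1)})$. Then a minimizer $\hat g=\sum_{k=1}^p\hat g_k$ of $K_n$ (when one exists) can be chosen such that $\hat g_j$ is piecewise constant with jump points only in $\{X_i^{(j)}:i=1,\dots,n\}$ if $m=1$, or $\hat g_j$ is continuous and piecewise linear with break points only in $\{X_i^{(j)}:i=1,\dots,n\}$ if $m=2$.
   Context: Data $(Y_i,X_i)$, $i=1,\dots,n$. For $k=1,\dots,p$, $x^{(k)}$ is a sub-vector of coordinates of $x$, $\mathcal G_k$ is a vector space of functions of $x^{(k)}$ with semi-norm $\|\cdot\|_{F,k}$, $\mathcal G=\{\sum_kg_k(x^{(k)}):g_k\in\mathcal G_k\}$. $\|f\|_n^2=n^{-1}\sum_if(X_i)^2$, $\|Y-g\|_n^2=n^{-1}\sum_i\{Y_i-g(X_i)\}^2$. With positive constants $\rho_{nk},\lambda_{nk}$ and $A_0>1$, $K_n(g)=\|Y-g\|_n^2/2+A_0\sum_{k=1}^p(\rho_{nk}\|g_k\|_{F,k}+\lambda_{nk}\|g_k\|_n)$, minimized over $g\in\mathcal G$ and decompositions $g=\sum_kg_k$. Total variation: $\mathrm{TV}(f)=\sup\sum_{i=1}^k|f(z_i)-f(z_{i-1})|$ over partitions $0\le z_0<\dots<z_k\le1$. $\mathcal V^m$ is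 the set of $g:[0,1]\to\mathbb R$ such that $g^{(m-2)}$ is absolutely continuous if $m\ge2$ and $\|g\|_{L_1}+\mathrm{TV}(g^{(m-1)})<\infty$. *)

theory Defs
  imports "HOL-Analysis.Analysis"
begin

definition TV :: "(real \<Rightarrow> real) \<Rightarrow> ereal" where
  "TV f = (SUP kz \<in> {(k::nat, z::nat \<Rightarrow> real). strict_mono_on {0..k} z \<and> 0 \<le> z 0 \<and> z k \<le> 1}.
             ereal (\<Sum>i\<in>{1..fst kz}. \<bar>f (snd kz i) - f (snd kz (i - 1))\<bar>))"

definition abs_cont01 :: "(real \<Rightarrow> real) \<Rightarrow> bool" where
  "abs_cont01 g \<longleftrightarrow> (\<forall>e>0. \<exists>d>0. \<forall>(k::nat) (a::nat \<Rightarrow> real) b.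
      (\<forall>i<k. 0 \<le> a i \<and> a i \<le> b i \<and> b i \<le> 1) \<and>
      (\<forall>i<k. \<forall>l<k. i \<noteq> l \<longrightarrow> b i \<le> a l \<or> b l \<le> a i) \<and>
      (\<Sum>i<k. b i - a i) < d \<longrightarrow> (\<Sum>i<k. \<bar>g (b i) - g (a i)\<bar>) < e)"

definition deriv_versions :: "(real \<Rightarrow> real) \<Rightarrow> (real \<Rightarrow> real) set" where
  "deriv_versions g = {d. d absolutely_integrable_on {0..1} \<and>
      (\<forall>x\<in>{0..1}. g x = g 0 + integral {0..x} d)}"

text \<open>The bounded variation space V^m on [0,1], for m = 1, 2.  (Values outside [0,1] are irrelevant.)\<close>
definition Vm :: "nat \<Rightarrow> (real \<Rightarrow> real) set" where
  "Vm m = {g. g absolutely_integrable_on {0..1} \<and>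
     (if m = 1 then TV g < \<infinity>
      else abs_cont01 g \<and> (\<exists>d\<in>deriv_versions g. TV d < \<infinity>))}"

text \<open>Semi-norm TV(g^(m-1)); for m = 2 the derivative is only defined a.e., and we take the
  infimum of TV over all versions.\<close>
definition Vm_seminorm :: "nat \<Rightarrow> (real \<Rightarrow> real) \<Rightarrow> real" where
  "Vm_seminorm m g = real_of_ereal (if m = 1 then TV g else (INF d\<in>deriv_versions g. TV d))"

definition emp_norm :: "nat \<Rightarrow> (nat \<Rightarrow> 'x) \<Rightarrow> ('x \<Rightarrow> real) \<Rightarrow> real" where
  "emp_norm n X f = sqrt ((1 / real n) * (\<Sum>i\<in>{1..n}. (f (X i))^2))"

text \<open>The criterion K_n evaluated at a decomposition gs (g = sum of gs k, k = 1..p).\<close>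
definition Kn :: "nat \<Rightarrow> nat \<Rightarrow> (nat \<Rightarrow> 'x) \<Rightarrow> (nat \<Rightarrow> real) \<Rightarrow> real \<Rightarrow> (nat \<Rightarrow> real)
    \<Rightarrow> (nat \<Rightarrow> real) \<Rightarrow> (nat \<Rightarrow> ('x \<Rightarrow> real) \<Rightarrow> real) \<Rightarrow> (nat \<Rightarrow> 'x \<Rightarrow> real) \<Rightarrow> real" where
  "Kn n p X Y A0 \<rho> lam F gs =
     (1 / real n) * (\<Sum>i\<in>{1..n}. (Y i - (\<Sum>k\<in>{1..p}. gs k (X i)))^2) / 2
     + A0 * (\<Sum>k\<in>{1..p}. \<rho> k * F k (gs k) + lam k * emp_norm n X (gs k))"

definition is_decomp :: "nat \<Rightarrow> (nat \<Rightarrow> ('x \<Rightarrow> real) set) \<Rightarrow> (nat \<Rightarrow> 'x \<Rightarrow> real) \<Rightarrow> bool" where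
  "is_decomp p G gs \<longleftrightarrow> (\<forall>k\<in>{1..p}. gs k \<in> G k)"

definition is_minimizer where
  "is_minimizer n p X Y A0 \<rho> lam G F gs \<longleftrightarrow> is_decomp p G gs \<and>
     (\<forall>gs'. is_decomp p G gs' \<longrightarrow> Kn n p X Y A0 \<rho> lam F gs \<le> Kn n p X Y A0 \<rho> lam F gs')"

definition piecewise_const_jumps_in :: "real set \<Rightarrow> (real \<Rightarrow> real) \<Rightarrow> bool" where
  "piecewise_const_jumps_in T h \<longleftrightarrow>
     (\<forall>s t. 0 \<le> s \<and> s \<le> t \<and> t \<le> 1 \<and> {s..t} \<inter> T = {} \<longrightarrow> h s = h t)"

definition cont_piecewise_linear_breaks_in :: "real set \<Rightarrow> (real \<Rightarrow> real) \<Rightarrow> bool" where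
  "cont_piecewise_linear_breaks_in T h \<longleftrightarrow> continuous_on {0..1} h \<and>
     (\<forall>s t. 0 \<le> s \<and> s < t \<and> t \<le> 1 \<and> {s<..<t} \<inter> T = {} \<longrightarrow>
        (\<exists>a b. \<forall>u\<in>{s..t}. h u = a + b * u))"

end

theory Submission
  imports Defs
begin

(* Replacing the j-th component of a minimizer by a function of V^m that takes the same values at
   the design points X_i^(j) and has no larger semi-norm changes neither the residuals nor any
   empirical norm, so it yields another minimizer. The interpolant of the component at the sorted
   design points is such a function. For m = 1 every variation sum of the piecewise constant
   interpolant is a variation sum of the component along a monotone choice of knots. For m = 2 the derivative of the piecewise linear
   interpolant has variation sum_l |s_l - s_(l-1)| in the chord slopes s_l; every s_l is the mean of
   any version d of the derivative over its segment, so this sum is an average over theta of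
   variation sums of d along the knots shifted by the fraction theta of their segments, hence at
   most TV(d). *)

subsection \<open>Variation sums\<close>

lemma strict_partition_of_mono:
  fixes z :: "nat \<Rightarrow> real" and f :: "real \<Rightarrow> real"
  assumes "mono_on {0..k} z"
  shows "\<exists>k'::nat. \<exists>z'. strict_mono_on {0..k'} z' \<and> z' 0 = z 0 \<and> z' k' = z k
     \<and> (\<Sum>i\<in>{1..k'}. \<bar>f (z' i) - f (z' (i - 1))\<bar>) = (\<Sum>i\<in>{1..k}. \<bar>f (z i) - f (z (i - 1))\<bar>)"
  using assms
proof (induction k)
  case 0
  show ?case by (rule exI[of _ 0], rule exI[of _ z]) (auto simp: strict_mono_on_def)
next
  case (Suc k)
  have "mono_on {0..k} z" using Suc.prems by (rule mono_on_subset) auto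
  with Suc.IH obtain k' :: nat and z' where IH: "strict_mono_on {0..k'} z'" "z' 0 = z 0" "z' k' = z k"
    "(\<Sum>i\<in>{1..k'}. \<bar>f (z' i) - f (z' (i - 1))\<bar>) = (\<Sum>i\<in>{1..k}. \<bar>f (z i) - f (z (i - 1))\<bar>)"
    by blast
  have "z k \<le> z (Suc k)" using Suc.prems by (rule mono_onD) auto
  show ?case
  proof (cases "z (Suc k) = z k")
    case True
    with IH show ?thesis by (intro exI[of _ k'] exI[of _ z']) simp
  next
    case False
    define z'' where "z'' = z'(Suc k' := z (Suc k))"
    from False \<open>z k \<le> z (Suc k)\<close> have "z' k' < z (Suc k)" using IH(3) by simp
    moreover have "z' i \<le> z' k'" if "i \<le> k'" for i
      using strict_mono_on_leD[OF IH(1)] that by simp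
    ultimately have mono: "strict_mono_on {0..Suc k'} z''"
      using IH(1) by (auto simp: z''_def strict_mono_on_def le_Suc_eq dest: order.strict_trans1)
    have "(\<Sum>i\<in>{1..k'}. \<bar>f (z'' i) - f (z'' (i - 1))\<bar>) = (\<Sum>i\<in>{1..k'}. \<bar>f (z' i) - f (z' (i - 1))\<bar>)"
      by (rule sum.cong) (auto simp: z''_def)
    with IH(3,4) have sum_eq: "(\<Sum>i\<in>{1..Suc k'}. \<bar>f (z'' i) - f (z'' (i - 1))\<bar>)
        = (\<Sum>i\<in>{1..Suc k}. \<bar>f (z i) - f (z (i - 1))\<bar>)"
      by (simp add: z''_def)
    show ?thesis
      by (intro exI[of _ "Suc k'"] exI[of _ z''] conjI mono sum_eq) (simp_all add: z''_def IH(2))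
  qed
qed

lemma variation_sum_le_TV:
  fixes z :: "nat \<Rightarrow> real" and k :: nat
  assumes "mono_on {0..k} z" "z 0 \<ge> 0" "z k \<le> 1"
  shows "ereal (\<Sum>i\<in>{1..k}. \<bar>f (z i) - f (z (i - 1))\<bar>) \<le> TV f"
proof -
  obtain k' :: nat and z' where "strict_mono_on {0..k'} z'" "z' 0 = z 0" "z' k' = z k"
     "(\<Sum>i\<in>{1..k'}. \<bar>f (z' i) - f (z' (i - 1))\<bar>) = (\<Sum>i\<in>{1..k}. \<bar>f (z i) - f (z (i - 1))\<bar>)"
    using strict_partition_of_mono[OF assms(1)] by blast
  moreover have "(k', z') \<in> {(k, z). strict_mono_on {0..k} z \<and> 0 \<le> z 0 \<and> z k \<le> 1}"
    using calculation assms(2,3) by simp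
  ultimately show ?thesis
    unfolding TV_def by (intro SUP_upper2[of "(k', z')"]) simp_all
qed

lemma TV_nonneg: "TV f \<ge> 0"
  using variation_sum_le_TV[of 0 "\<lambda>_. 0" f] by (simp add: mono_on_def zero_ereal_def)

lemma abs_diff_le_variation_sum:
  fixes s :: "nat \<Rightarrow> real"
  shows "a \<le> b \<Longrightarrow> \<bar>s b - s a\<bar> \<le> (\<Sum>l\<in>{1..b}. \<bar>s l - s (l - 1)\<bar>) - (\<Sum>l\<in>{1..a}. \<bar>s l - s (l - 1)\<bar>)"
proof (induction b)
  case (Suc b)
  then show ?case
    using abs_triangle_ineq[of "s (Suc b) - s b" "s b - s a"] by (cases "a = Suc b") (auto simp: le_Suc_eq)
qed simp

lemma variation_sum_reindex_le:
  fixes s :: "nat \<Rightarrow> real" and w :: "nat \<Rightarrow> nat"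
  assumes "mono_on {0..k} w"
  shows "(\<Sum>i\<in>{1..k}. \<bar>s (w i) - s (w (i - 1))\<bar>)
    \<le> (\<Sum>l\<in>{1..w k}. \<bar>s l - s (l - 1)\<bar>) - (\<Sum>l\<in>{1..w 0}. \<bar>s l - s (l - 1)\<bar>)"
  using assms
proof (induction k)
  case (Suc k)
  have "mono_on {0..k} w" using Suc.prems by (rule mono_on_subset) auto
  moreover have "w k \<le> w (Suc k)" using Suc.prems by (rule mono_onD) auto
  ultimately show ?case using Suc.IH abs_diff_le_variation_sum[of "w k" "w (Suc k)" s] by simp
qed simp

lemma finite_set_strict_mono_enumeration:
  fixes T :: "'a::linorder set"
  assumes "finite T" "T \<noteq> {}"
  obtains r :: nat and t where "T = t ` {0..r}" "strict_mono_on {0..r} t"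
proof -
  define xs where "xs = sorted_list_of_set T"
  have len: "length xs \<ge> 1" using assms unfolding xs_def by (cases "sorted_list_of_set T") auto
  have "T = set xs" unfolding xs_def using assms by simp
  also have "\<dots> = (!) xs ` {..<length xs}" by (metis atLeast_upt map_nth set_map)
  also have "{..<length xs} = {0..length xs - 1}" using len by auto
  finally have "T = (!) xs ` {0..length xs - 1}" .
  moreover have "strict_mono_on {0..length xs - 1} ((!) xs)"
    using len sorted_wrt_iff_nth_less[of "(<)" xs] unfolding xs_def
    by (auto simp: strict_mono_on_def)
  ultimately show thesis using that by blast
qed

text \<open>Knots are \<open>t 0 < \<dots> < t r\<close>; \<open>knot_index r t u\<close> is the \<open>a\<close> with \<open>t a \<le> u < t (Suc a)\<close>,
  and \<open>0\<close> to the left of \<open>t 1\<close>.\<close>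

definition knot_index :: "nat \<Rightarrow> (nat \<Rightarrow> real) \<Rightarrow> real \<Rightarrow> nat" where
  "knot_index r t u = card {a \<in> {1..r}. t a \<le> u}"

lemma mono_knot_index: "mono (knot_index r t)"
  unfolding knot_index_def by (intro monoI card_mono) auto

lemma knot_index_le: "knot_index r t u \<le> r"
proof -
  have "card {a \<in> {1..r}. t a \<le> u} \<le> card {1..r}" by (rule card_mono) auto
  then show ?thesis unfolding knot_index_def by simp
qed

lemma knot_index_eqI:
  assumes t: "strict_mono_on {0..r} t" and "a \<le> r" "t a \<le> u" "a < r \<Longrightarrow> u < t (Suc a)"
  shows "knot_index r t u = a"
proof -
  have "{b \<in> {1..r}. t b \<le> u} = {1..a}"
  proof (intro set_eqI iffI)
    fix b assume b: "b \<in> {b \<in> {1..r}. t b \<le> u}"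
    show "b \<in> {1..a}"
    proof (rule ccontr)
      assume "b \<notin> {1..a}"
      with b have "Suc a \<le> b" "b \<le> r" by auto
      then have "t (Suc a) \<le> t b" by (intro strict_mono_on_leD[OF t]) auto
      with b assms(4) \<open>Suc a \<le> b\<close> \<open>b \<le> r\<close> show False by auto
    qed
  next
    fix b assume "b \<in> {1..a}"
    moreover have "t b \<le> t a" if "b \<le> a" using that assms(2) by (intro strict_mono_on_leD[OF t]) auto
    ultimately show "b \<in> {b \<in> {1..r}. t b \<le> u}" using assms(2,3) by auto
  qed
  then show ?thesis unfolding knot_index_def by simp
qed

lemma knot_index_knot:
  assumes "strict_mono_on {0..r} t" "a \<le> r"
  shows "knot_index r t (t a) = a"
  using assms by (intro knot_index_eqI) (auto simp: strict_mono_on_def)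

lemma knot_index_eq_if_no_knot_between:
  assumes "s \<le> u" "\<forall>b\<in>{1..r}. t b \<notin> {s<..u}"
  shows "knot_index r t u = knot_index r t s"
proof -
  have "{b \<in> {1..r}. t b \<le> u} = {b \<in> {1..r}. t b \<le> s}"
    using assms by (auto simp: not_less[symmetric])
  then show ?thesis unfolding knot_index_def by simp
qed

lemma step_function_bounded:
  fixes k :: "real \<Rightarrow> nat" and g :: "nat \<Rightarrow> real"
  assumes "\<And>u. k u \<le> r"
  shows "\<bar>g (k u)\<bar> \<le> (\<Sum>i\<le>r. \<bar>g i\<bar>)"
  using member_le_sum[of "k u" "{..r}" "\<lambda>i. \<bar>g i\<bar>"] assms by simp

lemma step_function_absolutely_integrable:
  fixes k :: "real \<Rightarrow> nat" and g :: "nat \<Rightarrow> real"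
  assumes "mono k" "\<And>u. k u \<le> r"
  shows "(\<lambda>u. g (k u)) absolutely_integrable_on {a..b}"
proof (rule measurable_bounded_by_integrable_imp_absolutely_integrable)
  have "(\<lambda>u. real (k u)) \<in> borel_measurable borel"
    by (rule borel_measurable_mono) (use assms(1) in \<open>auto simp: mono_def\<close>)
  then have "(\<lambda>u. real (k u)) -` {real i} \<inter> space borel \<in> sets borel" for i
    by (rule measurable_sets) simp
  then have "k \<in> borel \<rightarrow>\<^sub>M count_space UNIV"
    by (auto simp: measurable_count_space_eq2_countable vimage_def)
  then have "(\<lambda>u. g (k u)) \<in> borel_measurable borel"
    by (rule measurable_compose) simp
  then show "(\<lambda>u. g (k u)) \<in> borel_measurable (lebesgue_on {a..b})"
    by (rule measurable_compose[OF id_borel_measurable_lebesgue_on, unfolded id_def])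
  show "norm (g (k u)) \<le> (\<Sum>i\<le>r. \<bar>g i\<bar>)" for u
    using step_function_bounded assms(2) by simp
qed auto

subsection \<open>Piecewise constant interpolation\<close>

definition step_interpolant :: "nat \<Rightarrow> (nat \<Rightarrow> real) \<Rightarrow> (real \<Rightarrow> real) \<Rightarrow> real \<Rightarrow> real" where
  "step_interpolant r t h u = h (t (knot_index r t u))"

lemma step_interpolant_knot:
  "strict_mono_on {0..r} t \<Longrightarrow> a \<le> r \<Longrightarrow> step_interpolant r t h (t a) = h (t a)"
  by (simp add: step_interpolant_def knot_index_knot)

lemma step_interpolant_piecewise_const:
  "piecewise_const_jumps_in (t ` {0..r}) (step_interpolant r t h)"
  unfolding piecewise_const_jumps_in_def step_interpolant_def
proof (intro allI impI, elim conjE)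
  fix s u :: real assume "s \<le> u" "{s..u} \<inter> t ` {0..r} = {}"
  have "\<forall>b\<in>{1..r}. t b \<notin> {s<..u}"
  proof
    fix b assume "b \<in> {1..r}"
    then have "t b \<in> t ` {0..r}" by auto
    with \<open>{s..u} \<inter> t ` {0..r} = {}\<close> have "t b \<notin> {s..u}" by blast
    then show "t b \<notin> {s<..u}" by auto
  qed
  with \<open>s \<le> u\<close> show "h (t (knot_index r t s)) = h (t (knot_index r t u))"
    by (simp add: knot_index_eq_if_no_knot_between)
qed

lemma TV_step_interpolant_le:
  assumes t: "strict_mono_on {0..r} t" and knots: "t ` {0..r} \<subseteq> {0..1}"
  shows "TV (step_interpolant r t h) \<le> TV h"
  unfolding TV_def[of "step_interpolant r t h"]
proof (rule SUP_least, clarify)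
  fix k and z :: "nat \<Rightarrow> real" assume z: "strict_mono_on {0..k} z"
  define w where "w i = t (knot_index r t (z i))" for i
  have "mono_on {0..k} w"
  proof (rule mono_onI)
    fix i j assume "i \<in> {0..k}" "j \<in> {0..k}" "i \<le> j"
    then have "knot_index r t (z i) \<le> knot_index r t (z j)"
      by (intro monoD[OF mono_knot_index] strict_mono_on_leD[OF z])
    then show "w i \<le> w j" unfolding w_def by (intro strict_mono_on_leD[OF t]) (auto intro: knot_index_le)
  qed
  moreover have "w i \<in> {0..1}" for i
    using knots knot_index_le[of r t "z i"] unfolding w_def by (meson atLeastAtMost_iff image_subset_iff le0)
  ultimately have "ereal (\<Sum>i\<in>{1..k}. \<bar>h (w i) - h (w (i - 1))\<bar>) \<le> TV h"
    by (intro variation_sum_le_TV) auto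
  then show "ereal (\<Sum>i\<in>{1..fst (k, z)}. \<bar>step_interpolant r t h (snd (k, z) i)
      - step_interpolant r t h (snd (k, z) (i - 1))\<bar>) \<le> TV h"
    by (simp add: w_def step_interpolant_def)
qed

lemma step_interpolant_Vm1:
  assumes "strict_mono_on {0..r} t" "t ` {0..r} \<subseteq> {0..1}" "h \<in> Vm 1"
  shows "step_interpolant r t h \<in> Vm 1" "Vm_seminorm 1 (step_interpolant r t h) \<le> Vm_seminorm 1 h"
proof -
  have TV: "TV (step_interpolant r t h) \<le> TV h" using assms(1,2) by (rule TV_step_interpolant_le)
  moreover have "TV h < \<infinity>" using assms(3) by (simp add: Vm_def)
  ultimately have "TV (step_interpolant r t h) < \<infinity>" by (rule le_less_trans)
  moreover have "step_interpolant r t h absolutely_integrable_on {0..1}"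
    unfolding step_interpolant_def
    by (rule step_function_absolutely_integrable[OF mono_knot_index knot_index_le])
  ultimately show "step_interpolant r t h \<in> Vm 1" by (simp add: Vm_def)
  show "Vm_seminorm 1 (step_interpolant r t h) \<le> Vm_seminorm 1 h"
    unfolding Vm_seminorm_def using real_of_ereal_positive_mono[OF TV_nonneg TV] \<open>TV h < \<infinity>\<close> by simp
qed

subsection \<open>Piecewise linear interpolation\<close>

lemma abs_cont01_if_lipschitz:
  assumes "\<And>a b. 0 \<le> a \<Longrightarrow> a \<le> b \<Longrightarrow> \<bar>g b - g a\<bar> \<le> M * (b - a)"
  shows "abs_cont01 g"
  unfolding abs_cont01_def
proof (intro allI impI)
  fix e :: real assume "e > 0"
  define M' where "M' = \<bar>M\<bar> + 1"
  have "M' > 0" unfolding M'_def by simp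
  show "\<exists>d>0. \<forall>(k::nat) (a::nat \<Rightarrow> real) b. (\<forall>i<k. 0 \<le> a i \<and> a i \<le> b i \<and> b i \<le> 1) \<and>
      (\<forall>i<k. \<forall>l<k. i \<noteq> l \<longrightarrow> b i \<le> a l \<or> b l \<le> a i) \<and> (\<Sum>i<k. b i - a i) < d
      \<longrightarrow> (\<Sum>i<k. \<bar>g (b i) - g (a i)\<bar>) < e"
  proof (intro exI[of _ "e / M'"] conjI allI impI)
    show "e / M' > 0" using \<open>e > 0\<close> \<open>M' > 0\<close> by simp
    fix k and a b :: "nat \<Rightarrow> real"
    assume "(\<forall>i<k. 0 \<le> a i \<and> a i \<le> b i \<and> b i \<le> 1) \<and>
      (\<forall>i<k. \<forall>l<k. i \<noteq> l \<longrightarrow> b i \<le> a l \<or> b l \<le> a i) \<and> (\<Sum>i<k. b i - a i) < e / M'"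
    then have ab: "\<forall>i<k. 0 \<le> a i \<and> a i \<le> b i \<and> b i \<le> 1" and len: "(\<Sum>i<k. b i - a i) < e / M'"
      by auto
    have "(\<Sum>i<k. \<bar>g (b i) - g (a i)\<bar>) \<le> (\<Sum>i<k. M' * (b i - a i))"
    proof (rule sum_mono)
      fix i assume "i \<in> {..<k}"
      with ab have "0 \<le> a i" "a i \<le> b i" by auto
      with assms[OF this] show "\<bar>g (b i) - g (a i)\<bar> \<le> M' * (b i - a i)"
        unfolding M'_def by (smt (verit) mult_right_mono)
    qed
    also have "\<dots> = M' * (\<Sum>i<k. b i - a i)" by (simp add: sum_distrib_left)
    also have "\<dots> < e" using len \<open>M' > 0\<close> by (simp add: pos_less_divide_eq mult.commute)
    finally show "(\<Sum>i<k. \<bar>g (b i) - g (a i)\<bar>) < e" .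
  qed
qed

definition knot_slope :: "(nat \<Rightarrow> real) \<Rightarrow> (real \<Rightarrow> real) \<Rightarrow> nat \<Rightarrow> real" where
  "knot_slope t h a = (h (t (Suc a)) - h (t a)) / (t (Suc a) - t a)"

text \<open>The derivative of the interpolant extends the first and last slopes beyond the outer knots.\<close>

definition interpolant_deriv :: "nat \<Rightarrow> (nat \<Rightarrow> real) \<Rightarrow> (real \<Rightarrow> real) \<Rightarrow> real \<Rightarrow> real" where
  "interpolant_deriv r t h u = (if r = 0 then 0 else knot_slope t h (min (knot_index r t u) (r - 1)))"

text \<open>For \<open>x \<ge> 0\<close> this is \<open>h (t 0)\<close> plus the integral of \<open>interpolant_deriv\<close> from \<open>t 0\<close> to \<open>x\<close>;
  integrating from \<open>0\<close> avoids reversed intervals left of \<open>t 0\<close>.\<close>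

definition linear_interpolant :: "nat \<Rightarrow> (nat \<Rightarrow> real) \<Rightarrow> (real \<Rightarrow> real) \<Rightarrow> real \<Rightarrow> real" where
  "linear_interpolant r t h x =
     h (t 0) - integral {0..t 0} (interpolant_deriv r t h) + integral {0..x} (interpolant_deriv r t h)"

lemma interpolant_deriv_absolutely_integrable:
  "interpolant_deriv r t h absolutely_integrable_on {a..b}"
  unfolding interpolant_deriv_def
  using step_function_absolutely_integrable[OF mono_knot_index[of r t] knot_index_le,
      where g="\<lambda>i. if r = 0 then 0 else knot_slope t h (min i (r - 1))"]
  by (simp add: interpolant_deriv_def)

lemma interpolant_deriv_integrable: "interpolant_deriv r t h integrable_on {a..b}"
  using interpolant_deriv_absolutely_integrable absolutely_integrable_on_def by blast

lemma interpolant_deriv_bounded: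
  "\<bar>interpolant_deriv r t h u\<bar> \<le> (\<Sum>i\<le>r. \<bar>if r = 0 then 0 else knot_slope t h (min i (r - 1))\<bar>)"
  using step_function_bounded[where k="knot_index r t" and g="\<lambda>i. if r = 0 then 0 else knot_slope t h (min i (r - 1))",
      OF knot_index_le]
  by (simp add: interpolant_deriv_def)

lemma linear_interpolant_combine:
  assumes "0 \<le> a" "a \<le> b"
  shows "linear_interpolant r t h b = linear_interpolant r t h a + integral {a..b} (interpolant_deriv r t h)"
  using Henstock_Kurzweil_Integration.integral_combine[OF _ _ interpolant_deriv_integrable] assms
  unfolding linear_interpolant_def by simp

lemma linear_interpolant_affine_between_knots:
  assumes "0 \<le> s" "s \<le> u" "\<forall>b\<in>{1..r}. t b \<notin> {s<..<u}"
  shows "linear_interpolant r t h u = linear_interpolant r t h s + interpolant_deriv r t h s * (u - s)"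
proof -
  have const: "((\<lambda>_. interpolant_deriv r t h s) has_integral interpolant_deriv r t h s * (u - s)) {s..u}"
    using has_integral_const_real[of "interpolant_deriv r t h s" s u] assms(2) by (simp add: mult.commute)
  have "(interpolant_deriv r t h has_integral interpolant_deriv r t h s * (u - s)) {s..u}"
  proof (rule has_integral_spike_finite[OF _ _ const])
    show "finite {u}" by simp
    fix w assume "w \<in> {s..u} - {u}"
    with assms(3) have "knot_index r t w = knot_index r t s"
      by (intro knot_index_eq_if_no_knot_between) auto
    then show "interpolant_deriv r t h w = interpolant_deriv r t h s"
      by (simp add: interpolant_deriv_def)
  qed
  with linear_interpolant_combine[OF assms(1,2)] show ?thesis by (simp add: integral_unique)
qed

lemma linear_interpolant_knot:
  assumes t: "strict_mono_on {0..r} t" and knots: "t ` {0..r} \<subseteq> {0..1}"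
  shows "a \<le> r \<Longrightarrow> linear_interpolant r t h (t a) = h (t a)"
proof (induction a)
  case 0
  then show ?case by (simp add: linear_interpolant_def)
next
  case (Suc a)
  have lt: "t a < t (Suc a)" using Suc.prems by (intro strict_mono_onD[OF t]) auto
  have "t b \<notin> {t a<..<t (Suc a)}" if "b \<le> r" for b
  proof (cases "b \<le> a")
    case True
    then show ?thesis using that Suc.prems strict_mono_on_leD[OF t, of b a] by auto
  next
    case False
    then show ?thesis using that strict_mono_on_leD[OF t, of "Suc a" b] by auto
  qed
  moreover have "t a \<in> t ` {0..r}" using Suc.prems by auto
  with knots have "0 \<le> t a" by auto
  ultimately have "linear_interpolant r t h (t (Suc a))
      = linear_interpolant r t h (t a) + interpolant_deriv r t h (t a) * (t (Suc a) - t a)"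
    using lt by (intro linear_interpolant_affine_between_knots) auto
  moreover have "interpolant_deriv r t h (t a) = knot_slope t h a"
    using Suc.prems knot_index_knot[OF t, of a] by (simp add: interpolant_deriv_def)
  ultimately show ?case using Suc lt by (simp add: knot_slope_def)
qed

lemma linear_interpolant_piecewise_linear:
  "cont_piecewise_linear_breaks_in (t ` {0..r}) (linear_interpolant r t h)"
  unfolding cont_piecewise_linear_breaks_in_def
proof (intro conjI allI impI)
  show "continuous_on {0..1} (linear_interpolant r t h)"
    unfolding linear_interpolant_def
    by (intro continuous_on_add continuous_on_const indefinite_integral_continuous_1
        interpolant_deriv_integrable)
next
  fix s v :: real assume "0 \<le> s \<and> s < v \<and> v \<le> 1 \<and> {s<..<v} \<inter> t ` {0..r} = {}"
  then have "0 \<le> s" and no_knot: "{s<..<v} \<inter> t ` {0..r} = {}" by auto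
  have "linear_interpolant r t h u
      = (linear_interpolant r t h s - interpolant_deriv r t h s * s) + interpolant_deriv r t h s * u"
    if u: "u \<in> {s..v}" for u
  proof -
    have "t b \<notin> {s<..<u}" if "b \<in> {1..r}" for b
    proof -
      from that have "t b \<in> t ` {0..r}" by auto
      with no_knot have "t b \<notin> {s<..<v}" by blast
      with u show ?thesis by auto
    qed
    with \<open>0 \<le> s\<close> u have "linear_interpolant r t h u
        = linear_interpolant r t h s + interpolant_deriv r t h s * (u - s)"
      by (intro linear_interpolant_affine_between_knots) auto
    then show ?thesis by (simp add: algebra_simps)
  qed
  then show "\<exists>a b. \<forall>u\<in>{s..v}. linear_interpolant r t h u = a + b * u" by blast
qed

lemma abs_cont01_linear_interpolant: "abs_cont01 (linear_interpolant r t h)"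
proof (rule abs_cont01_if_lipschitz)
  fix a b :: real assume ab: "0 \<le> a" "a \<le> b"
  define M where "M = (\<Sum>i\<le>r. \<bar>if r = 0 then 0 else knot_slope t h (min i (r - 1))\<bar>)"
  have "norm (integral {a..b} (interpolant_deriv r t h)) \<le> integral {a..b} (\<lambda>_. M)"
    using interpolant_deriv_bounded unfolding M_def
    by (intro integral_norm_bound_integral interpolant_deriv_integrable) auto
  with ab show "\<bar>linear_interpolant r t h b - linear_interpolant r t h a\<bar> \<le> M * (b - a)"
    using linear_interpolant_combine[OF ab, of r t h] by (simp add: mult.commute)
qed

lemma interpolant_deriv_in_deriv_versions:
  "interpolant_deriv r t h \<in> deriv_versions (linear_interpolant r t h)"
  unfolding deriv_versions_def
proof (intro CollectI conjI ballI interpolant_deriv_absolutely_integrable)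
  fix x :: real assume "x \<in> {0..1}"
  then show "linear_interpolant r t h x
      = linear_interpolant r t h 0 + integral {0..x} (interpolant_deriv r t h)"
    by (intro linear_interpolant_combine) auto
qed

definition slope_variation :: "nat \<Rightarrow> (nat \<Rightarrow> real) \<Rightarrow> (real \<Rightarrow> real) \<Rightarrow> real" where
  "slope_variation r t h = (\<Sum>l\<in>{1..r - 1}. \<bar>knot_slope t h l - knot_slope t h (l - 1)\<bar>)"

lemma TV_interpolant_deriv_le: "TV (interpolant_deriv r t h) \<le> ereal (slope_variation r t h)"
  unfolding TV_def[of "interpolant_deriv r t h"]
proof (rule SUP_least, clarify)
  fix k and z :: "nat \<Rightarrow> real" assume z: "strict_mono_on {0..k} z"
  have nonneg: "0 \<le> slope_variation r t h" unfolding slope_variation_def by (rule sum_nonneg) simp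
  have "(\<Sum>i\<in>{1..k}. \<bar>interpolant_deriv r t h (z i) - interpolant_deriv r t h (z (i - 1))\<bar>)
      \<le> slope_variation r t h"
  proof (cases "r = 0")
    case True
    with nonneg show ?thesis by (simp add: interpolant_deriv_def)
  next
    case False
    define w where "w i = min (knot_index r t (z i)) (r - 1)" for i
    have "mono_on {0..k} w" unfolding w_def
      by (intro mono_onI min.mono monoD[OF mono_knot_index] strict_mono_on_leD[OF z]) auto
    then have "(\<Sum>i\<in>{1..k}. \<bar>knot_slope t h (w i) - knot_slope t h (w (i - 1))\<bar>)
        \<le> (\<Sum>l\<in>{1..w k}. \<bar>knot_slope t h l - knot_slope t h (l - 1)\<bar>)"
      using variation_sum_reindex_le[of k w "knot_slope t h"] by (smt (verit) sum_nonneg)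
    also have "\<dots> \<le> slope_variation r t h"
      unfolding slope_variation_def by (rule sum_mono2) (auto simp: w_def)
    finally show ?thesis using False by (simp add: interpolant_deriv_def w_def)
  qed
  then show "ereal (\<Sum>i\<in>{1..fst (k, z)}. \<bar>interpolant_deriv r t h (snd (k, z) i)
      - interpolant_deriv r t h (snd (k, z) (i - 1))\<bar>) \<le> ereal (slope_variation r t h)"
    by simp
qed

lemma deriv_version_average_slope:
  assumes d: "d \<in> deriv_versions h" and "0 \<le> a" "a < b" "b \<le> 1"
  shows "((\<lambda>\<theta>. d (a + \<theta> * (b - a))) has_integral (h b - h a) / (b - a)) {0..1}"
proof -
  from d have int: "d integrable_on {0..1}" and h: "\<And>x. x \<in> {0..1} \<Longrightarrow> h x = h 0 + integral {0..x} d"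
    unfolding deriv_versions_def absolutely_integrable_on_def by blast+
  have "integral {0..a} d + integral {a..b} d = integral {0..b} d"
    using assms(2-4) by (intro Henstock_Kurzweil_Integration.integral_combine
        integrable_subinterval_real[OF int]) auto
  moreover have "h a = h 0 + integral {0..a} d" "h b = h 0 + integral {0..b} d"
    using assms(2-4) by (auto intro!: h)
  ultimately have "integral {a..b} d = h b - h a" by simp
  moreover have "d integrable_on {a..b}"
    using assms(2-4) by (intro integrable_subinterval_real[OF int]) auto
  then have "(d has_integral integral {a..b} d) (cbox a b)"
    unfolding box_real(2) by (rule integrable_integral)
  ultimately have "((\<lambda>x. d ((b - a) *\<^sub>R x + a)) has_integral (h b - h a) /\<^sub>R (b - a) ^ DIM(real))
      (cbox ((a - a) /\<^sub>R (b - a)) ((b - a) /\<^sub>R (b - a)))"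
    using assms(3) by (intro has_integral_affinity') auto
  moreover have "cbox ((a - a) /\<^sub>R (b - a)) ((b - a) /\<^sub>R (b - a)) = {0..1::real}"
    using assms(3) by simp
  moreover have "(\<lambda>x. d ((b - a) *\<^sub>R x + a)) = (\<lambda>\<theta>. d (a + \<theta> * (b - a)))"
    by (simp add: algebra_simps)
  ultimately show ?thesis by (simp add: divide_inverse_commute)
qed

lemma shifted_knot_bounds:
  fixes t :: "nat \<Rightarrow> real"
  assumes t: "strict_mono_on {0..r} t" and "l < r" "0 \<le> \<theta>" "\<theta> \<le> 1"
  shows "t l \<le> t l + \<theta> * (t (Suc l) - t l)" "t l + \<theta> * (t (Suc l) - t l) \<le> t (Suc l)"
proof -
  have "t l \<le> t (Suc l)" using assms(2) by (intro strict_mono_on_leD[OF t]) auto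
  moreover from this have "\<theta> * (t (Suc l) - t l) \<le> 1 * (t (Suc l) - t l)"
    using assms(4) by (intro mult_right_mono) auto
  ultimately show "t l \<le> t l + \<theta> * (t (Suc l) - t l)" "t l + \<theta> * (t (Suc l) - t l) \<le> t (Suc l)"
    using assms(3) by simp_all
qed

lemma mono_on_shifted_knots:
  fixes t :: "nat \<Rightarrow> real"
  assumes t: "strict_mono_on {0..r} t" and "0 \<le> \<theta>" "\<theta> \<le> 1"
  shows "mono_on {0..r - 1} (\<lambda>l. t l + \<theta> * (t (Suc l) - t l))"
proof (rule mono_onI)
  fix i j assume ij: "i \<in> {0..r - 1}" "j \<in> {0..r - 1}" "i \<le> j"
  show "t i + \<theta> * (t (Suc i) - t i) \<le> t j + \<theta> * (t (Suc j) - t j)"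
  proof (cases "i = j")
    case False
    with ij have "Suc i \<le> j" "j < r" by auto
    then have "t (Suc i) \<le> t j" by (intro strict_mono_on_leD[OF t]) auto
    with shifted_knot_bounds[OF t _ assms(2,3), of i] shifted_knot_bounds[OF t _ assms(2,3), of j]
      \<open>Suc i \<le> j\<close> \<open>j < r\<close>
    show ?thesis by linarith
  qed simp
qed

lemma slope_variation_le_TV:
  assumes t: "strict_mono_on {0..r} t" and knots: "t ` {0..r} \<subseteq> {0..1}" and d: "d \<in> deriv_versions h"
  shows "ereal (slope_variation r t h) \<le> TV d"
proof (cases "TV d")
  case (real T)
  show ?thesis
  proof (cases "r = 0")
    case True
    then show ?thesis using TV_nonneg[of d] by (simp add: slope_variation_def zero_ereal_def)
  next
    case False
    define z where "z \<theta> l = t l + \<theta> * (t (Suc l) - t l)" for \<theta> l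
    define \<sigma> where "\<sigma> l = sgn (knot_slope t h l - knot_slope t h (l - 1))" for l
    have "((\<lambda>\<theta>. d (z \<theta> l)) has_integral knot_slope t h l) {0..1}" if "l < r" for l
    proof -
      have "t l < t (Suc l)" using that by (intro strict_mono_onD[OF t]) auto
      moreover have "t l \<in> {0..1}" "t (Suc l) \<in> {0..1}" using knots that by (auto simp: image_subset_iff)
      ultimately show ?thesis
        unfolding z_def knot_slope_def by (intro deriv_version_average_slope[OF d]) auto
    qed
    then have "((\<lambda>\<theta>. \<Sum>l\<in>{1..r - 1}. \<sigma> l * (d (z \<theta> l) - d (z \<theta> (l - 1)))) has_integral
        (\<Sum>l\<in>{1..r - 1}. \<sigma> l * (knot_slope t h l - knot_slope t h (l - 1)))) {0..1}"
      by (intro has_integral_sum has_integral_mult_right has_integral_diff) auto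
    also have "(\<Sum>l\<in>{1..r - 1}. \<sigma> l * (knot_slope t h l - knot_slope t h (l - 1))) = slope_variation r t h"
      unfolding slope_variation_def \<sigma>_def by (intro sum.cong refl) (simp add: abs_sgn mult.commute)
    finally have integral: "((\<lambda>\<theta>. \<Sum>l\<in>{1..r - 1}. \<sigma> l * (d (z \<theta> l) - d (z \<theta> (l - 1))))
        has_integral slope_variation r t h) {0..1}" .
    have "(\<Sum>l\<in>{1..r - 1}. \<sigma> l * (d (z \<theta> l) - d (z \<theta> (l - 1)))) \<le> T" if "\<theta> \<in> {0..1}" for \<theta>
    proof -
      have "mono_on {0..r - 1} (z \<theta>)"
        unfolding z_def using that by (intro mono_on_shifted_knots[OF t]) auto
      moreover have "t 0 \<le> z \<theta> 0" "z \<theta> (r - 1) \<le> t r"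
        using shifted_knot_bounds[OF t, of 0 \<theta>] shifted_knot_bounds[OF t, of "r - 1" \<theta>] that False
        unfolding z_def by auto
      moreover have "t 0 \<in> {0..1}" "t r \<in> {0..1}" using knots by (auto simp: image_subset_iff)
      ultimately have "ereal (\<Sum>l\<in>{1..r - 1}. \<bar>d (z \<theta> l) - d (z \<theta> (l - 1))\<bar>) \<le> TV d"
        using knots by (intro variation_sum_le_TV) auto
      moreover have "\<sigma> l * (d (z \<theta> l) - d (z \<theta> (l - 1))) \<le> \<bar>d (z \<theta> l) - d (z \<theta> (l - 1))\<bar>" for l
        unfolding \<sigma>_def sgn_if by auto
      ultimately show ?thesis using real by (smt (verit) ereal_less_eq(3) sum_mono)
    qed
    with integral have "slope_variation r t h \<le> T"
      using has_integral_le[OF integral has_integral_const_real[of T 0 1]] by simp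
    with real show ?thesis by simp
  qed
qed (use TV_nonneg[of d] in auto)

lemma linear_interpolant_Vm2:
  assumes t: "strict_mono_on {0..r} t" and knots: "t ` {0..r} \<subseteq> {0..1}" and h: "h \<in> Vm 2"
  shows "linear_interpolant r t h \<in> Vm 2"
    and "Vm_seminorm 2 (linear_interpolant r t h) \<le> Vm_seminorm 2 h"
proof -
  obtain d0 where d0: "d0 \<in> deriv_versions h" "TV d0 < \<infinity>" using h by (auto simp: Vm_def)
  have TV_deriv: "TV (interpolant_deriv r t h) < \<infinity>"
    using TV_interpolant_deriv_le by (rule le_less_trans) simp
  have "linear_interpolant r t h absolutely_integrable_on {0..1}"
    using linear_interpolant_piecewise_linear
    by (intro absolutely_integrable_continuous_real) (simp add: cont_piecewise_linear_breaks_in_def)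
  with TV_deriv show "linear_interpolant r t h \<in> Vm 2"
    using abs_cont01_linear_interpolant interpolant_deriv_in_deriv_versions by (auto simp: Vm_def)
  have "(INF d\<in>deriv_versions (linear_interpolant r t h). TV d) \<le> TV (interpolant_deriv r t h)"
    by (rule INF_lower[OF interpolant_deriv_in_deriv_versions])
  also have "\<dots> \<le> ereal (slope_variation r t h)" by (rule TV_interpolant_deriv_le)
  also have "\<dots> \<le> (INF d\<in>deriv_versions h. TV d)"
    by (rule INF_greatest) (rule slope_variation_le_TV[OF t knots])
  finally have "(INF d\<in>deriv_versions (linear_interpolant r t h). TV d) \<le> (INF d\<in>deriv_versions h. TV d)" .
  moreover have "(INF d\<in>deriv_versions h. TV d) \<noteq> \<infinity>"
    using INF_lower[OF d0(1), of TV] d0(2) by auto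
  moreover have "0 \<le> (INF d\<in>deriv_versions (linear_interpolant r t h). TV d)"
    by (rule INF_greatest) (rule TV_nonneg)
  ultimately show "Vm_seminorm 2 (linear_interpolant r t h) \<le> Vm_seminorm 2 h"
    unfolding Vm_seminorm_def by (simp add: real_of_ereal_positive_mono)
qed

lemma Vm_interpolant_exists:
  assumes m: "m = 1 \<or> m = 2" and T: "finite T" "T \<noteq> {}" "T \<subseteq> {0..1}" and h: "h \<in> Vm m"
  shows "\<exists>h'\<in>Vm m. Vm_seminorm m h' \<le> Vm_seminorm m h \<and> (\<forall>x\<in>T. h' x = h x) \<and>
           (if m = 1 then piecewise_const_jumps_in T h' else cont_piecewise_linear_breaks_in T h')"
proof -
  obtain r :: nat and t where T_eq: "T = t ` {0..r}" and t: "strict_mono_on {0..r} t"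
    using finite_set_strict_mono_enumeration[OF T(1,2)] by blast
  from T(3) have knots: "t ` {0..r} \<subseteq> {0..1}" by (simp only: T_eq)
  show ?thesis
  proof (cases "m = 1")
    case True
    with h have "step_interpolant r t h \<in> Vm m"
      "Vm_seminorm m (step_interpolant r t h) \<le> Vm_seminorm m h"
      using step_interpolant_Vm1[OF t knots] by auto
    moreover have "\<forall>x\<in>T. step_interpolant r t h x = h x"
      unfolding T_eq using step_interpolant_knot[OF t] by auto
    moreover have "if m = 1 then piecewise_const_jumps_in T (step_interpolant r t h)
        else cont_piecewise_linear_breaks_in T (step_interpolant r t h)"
      using True step_interpolant_piecewise_const by (simp add: T_eq)
    ultimately show ?thesis by blast
  next
    case False
    with m have "m = 2" by simp
    with h have "linear_interpolant r t h \<in> Vm m"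
      "Vm_seminorm m (linear_interpolant r t h) \<le> Vm_seminorm m h"
      using linear_interpolant_Vm2[OF t knots] by auto
    moreover have "\<forall>x\<in>T. linear_interpolant r t h x = h x"
      unfolding T_eq using linear_interpolant_knot[OF t knots] by auto
    moreover have "if m = 1 then piecewise_const_jumps_in T (linear_interpolant r t h)
        else cont_piecewise_linear_breaks_in T (linear_interpolant r t h)"
      using False linear_interpolant_piecewise_linear by (simp add: T_eq)
    ultimately show ?thesis by blast
  qed
qed

subsection \<open>Minimizers of the penalized criterion\<close>

lemma Kn_replace_component_le:
  assumes "j \<in> {1..p}" "A0 \<ge> 0" "\<rho> j \<ge> 0"
    and agree: "\<forall>i\<in>{1..n}. g (X i) = gs j (X i)" and "F j g \<le> F j (gs j)"
  shows "Kn n p X Y A0 \<rho> lam F (gs(j := g)) \<le> Kn n p X Y A0 \<rho> lam F gs"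
proof -
  have same_values: "(gs(j := g)) k (X i) = gs k (X i)" if "i \<in> {1..n}" for k i
    using agree that by simp
  then have "emp_norm n X ((gs(j := g)) k) = emp_norm n X (gs k)" for k
    unfolding emp_norm_def by simp
  moreover have "\<rho> j * F j g \<le> \<rho> j * F j (gs j)" using assms(5,3) by (rule mult_left_mono)
  ultimately have "(\<Sum>k\<in>{1..p}. \<rho> k * F k ((gs(j := g)) k) + lam k * emp_norm n X ((gs(j := g)) k))
      \<le> (\<Sum>k\<in>{1..p}. \<rho> k * F k (gs k) + lam k * emp_norm n X (gs k))"
    by (intro sum_mono) auto
  with same_values assms(2) show ?thesis unfolding Kn_def by (simp add: mult_left_mono)
qed

lemma is_minimizer_replace_component:
  assumes min: "is_minimizer n p X Y A0 \<rho> lam G F gs" and "j \<in> {1..p}" "A0 \<ge> 0" "\<rho> j \<ge> 0"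
    and "g \<in> G j" "\<forall>i\<in>{1..n}. g (X i) = gs j (X i)" "F j g \<le> F j (gs j)"
  shows "is_minimizer n p X Y A0 \<rho> lam G F (gs(j := g))"
proof -
  have "Kn n p X Y A0 \<rho> lam F (gs(j := g)) \<le> Kn n p X Y A0 \<rho> lam F gs"
    using assms(2-4,6,7) by (rule Kn_replace_component_le)
  moreover have "\<forall>gs'. is_decomp p G gs' \<longrightarrow> Kn n p X Y A0 \<rho> lam F gs \<le> Kn n p X Y A0 \<rho> lam F gs'"
    and "is_decomp p G gs" using min unfolding is_minimizer_def by blast+
  ultimately have "\<forall>gs'. is_decomp p G gs' \<longrightarrow>
      Kn n p X Y A0 \<rho> lam F (gs(j := g)) \<le> Kn n p X Y A0 \<rho> lam F gs'"
    by (blast intro: order_trans)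
  moreover have "is_decomp p G (gs(j := g))"
    using \<open>is_decomp p G gs\<close> \<open>g \<in> G j\<close> by (simp add: is_decomp_def)
  ultimately show ?thesis unfolding is_minimizer_def by blast
qed

theorem proposition2:
  fixes n p j c m :: nat
    and X :: "nat \<Rightarrow> (nat \<Rightarrow> real)" and Y :: "nat \<Rightarrow> real"
    and S :: "nat \<Rightarrow> nat set"
    and G :: "nat \<Rightarrow> ((nat \<Rightarrow> real) \<Rightarrow> real) set"
    and F :: "nat \<Rightarrow> ((nat \<Rightarrow> real) \<Rightarrow> real) \<Rightarrow> real"
    and A0 :: real and \<rho> lam :: "nat \<Rightarrow> real"
  assumes n_pos: "n \<ge> 1" and j_range: "j \<in> {1..p}"
    and A0: "A0 > 1"
    and rho_pos: "\<forall>k\<in>{1..p}. \<rho> k > 0" and lambda_pos: "\<forall>k\<in>{1..p}. lam k > 0"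
    and G_dep: "\<forall>k\<in>{1..p}. \<forall>g\<in>G k. \<forall>x y. (\<forall>l\<in>S k. x l = y l) \<longrightarrow> g x = g y"
    and G_space: "\<forall>k\<in>{1..p}-{j}. (\<lambda>x. 0) \<in> G k \<and> (\<forall>f\<in>G k. \<forall>g\<in>G k. (\<lambda>x. f x + g x) \<in> G k)
                     \<and> (\<forall>f\<in>G k. \<forall>a::real. (\<lambda>x. a * f x) \<in> G k)"
    and F_seminorm: "\<forall>k\<in>{1..p}-{j}. \<forall>f\<in>G k. \<forall>g\<in>G k. F k f \<ge> 0
                     \<and> F k (\<lambda>x. f x + g x) \<le> F k f + F k g
                     \<and> (\<forall>a::real. F k (\<lambda>x. a * f x) = \<bar>a\<bar> * F k f)"
    and S_j: "S j = {c}"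
    and X_j_unit: "\<forall>i\<in>{1..n}. X i c \<in> {0..1}"
    and m_cases: "m = 1 \<or> m = 2"
    and G_j: "G j = {(\<lambda>x. h (x c)) | h. h \<in> Vm m}"
    and F_j: "\<forall>h\<in>Vm m. F j (\<lambda>x. h (x c)) = Vm_seminorm m h"
    and exists_min: "\<exists>gs. is_minimizer n p X Y A0 \<rho> lam G F gs"
  shows "\<exists>gs h. is_minimizer n p X Y A0 \<rho> lam G F gs \<and> h \<in> Vm m \<and> gs j = (\<lambda>x. h (x c)) \<and>
           (if m = 1 then piecewise_const_jumps_in {X i c | i. i \<in> {1..n}} h
            else cont_piecewise_linear_breaks_in {X i c | i. i \<in> {1..n}} h)"
proof -
  obtain gs where gs: "is_minimizer n p X Y A0 \<rho> lam G F gs" using exists_min by blast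
  then have "gs j \<in> G j" using j_range unfolding is_minimizer_def is_decomp_def by blast
  then obtain h where h: "h \<in> Vm m" and gs_j: "gs j = (\<lambda>x. h (x c))" unfolding G_j by blast
  define T where "T = {X i c | i. i \<in> {1..n}}"
  have T_image: "T = (\<lambda>i. X i c) ` {1..n}" unfolding T_def by auto
  have "finite T" "T \<noteq> {}" "T \<subseteq> {0..1}" using n_pos X_j_unit unfolding T_image by auto
  then obtain h' where h': "h' \<in> Vm m" "Vm_seminorm m h' \<le> Vm_seminorm m h" "\<forall>x\<in>T. h' x = h x"
    and shape: "if m = 1 then piecewise_const_jumps_in T h' else cont_piecewise_linear_breaks_in T h'"
    using Vm_interpolant_exists[OF m_cases _ _ _ h] by blast
  have "is_minimizer n p X Y A0 \<rho> lam G F (gs(j := (\<lambda>x. h' (x c))))"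
  proof (rule is_minimizer_replace_component[OF gs j_range])
    show "A0 \<ge> 0" using A0 by simp
    show "\<rho> j \<ge> 0" using rho_pos j_range by (simp add: less_imp_le)
    show "(\<lambda>x. h' (x c)) \<in> G j" using h'(1) unfolding G_j by blast
    show "\<forall>i\<in>{1..n}. h' (X i c) = gs j (X i)" using h'(3) gs_j unfolding T_image by simp
    show "F j (\<lambda>x. h' (x c)) \<le> F j (gs j)" using F_j h h'(1,2) gs_j by simp
  qed
  with h'(1) shape show ?thesis unfolding T_def by (intro exI[of _ "gs(j := (\<lambda>x. h' (x c)))"] exI[of _ h']) simp
qed

end
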